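(* Let $n\ge 1$, let $B_1,\dots,B_n$ be independent real-valued service times with finite means $\mu_i$ and variances $\sigma_i^2$, and let $\omega\in(0,1)$. Assume (dilation ordering) $B_1\le_{\mathrm{dil}}B_2\le_{\mathrm{dil}}\cdots\le_{\mathrm{dil}}B_n$, and (symmetry) each $B_i$ has a distribution symmetric around its mean $\mu_i$. Then $$\varrho_\omega=\frac{C(\mathrm{Id},\boldsymbol\mu,\omega)}{\min_{\tau\in\mathsf S_n}C(\tau,\boldsymbol\mu,\omega)}\le 2.$$
   Context: Appointment model: a sequence is a permutation $\tau\in\mathsf S_n$ of $\{1,\dots,n\}$, $\tau(i)$ being the patient in appointment slot $i$. A schedule is a vector $\boldsymbol x=(x_1,\dots,x_n)$, where $x_j$ is the interarrival time between patient $j$ and the next patient. Waiting times $W_i$ and idle times $I_i$ of slot $i$ are given by $W_1=I_1=0$ and $W_{i+1}=(W_i+B_{\tau(i)}-x_{\tau(i)})^+$, $I_{i+1}=(W_i+B_{\tau(i)}-x_{\tau(i)})^-$, where $a^+=\max\{0,a\}$, $a^-=\max\{0,-a\}$. The cost is $C(\tau,\boldsymbol x,\omega)=\omega\sum_{i=1}^n\mathbb E I_i+(1-\omega)\sum_{i=1}^n\mathbb E W_i$. The mean-based schedule is $\boldsymbol\mu=(\mu_1,\dots,\mu_n)$, and $\mathrm{Id}$ is the identity permutation (the smallest-variance-first sequence). For random variables $A,B$, $A\le_{\mathrm{cx}}B$ means $\mathbb E\phi(A)\le\mathbb E\phi(B)$ for all convex $\phi:\mathbb R\to\mathbb R$ for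 which the expectations exist, and $A\le_{\mathrm{dil}}B$ means $A-\mathbb EA\le_{\mathrm{cx}}B-\mathbb EB$. *)

theory Defs
  imports "HOL-Probability.Probability"
begin

definition cx_le :: "'a measure \<Rightarrow> ('a \<Rightarrow> real) \<Rightarrow> ('a \<Rightarrow> real) \<Rightarrow> bool" where
  "cx_le M A B \<longleftrightarrow>
     (\<forall>\<phi> :: real \<Rightarrow> real. convex_on UNIV \<phi> \<longrightarrow>
        integrable M (\<lambda>x. \<phi> (A x)) \<longrightarrow> integrable M (\<lambda>x. \<phi> (B x)) \<longrightarrow>
        (\<integral>x. \<phi> (A x) \<partial>M) \<le> (\<integral>x. \<phi> (B x) \<partial>M))"

definition dil_le :: "'a measure \<Rightarrow> ('a \<Rightarrow> real) \<Rightarrow> ('a \<Rightarrow> real) \<Rightarrow> bool" where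
  "dil_le M A B \<longleftrightarrow>
     cx_le M (\<lambda>x. A x - (\<integral>y. A y \<partial>M)) (\<lambda>x. B x - (\<integral>y. B y \<partial>M))"

fun wait :: "(nat \<Rightarrow> nat) \<Rightarrow> (nat \<Rightarrow> real) \<Rightarrow> (nat \<Rightarrow> 'a \<Rightarrow> real) \<Rightarrow> nat \<Rightarrow> 'a \<Rightarrow> real" where
  "wait \<tau> x B 0 s = 0"
| "wait \<tau> x B (Suc i) s =
     (if i = 0 then 0 else max 0 (wait \<tau> x B i s + B (\<tau> i) s - x (\<tau> i)))"

definition idle :: "(nat \<Rightarrow> nat) \<Rightarrow> (nat \<Rightarrow> real) \<Rightarrow> (nat \<Rightarrow> 'a \<Rightarrow> real) \<Rightarrow> nat \<Rightarrow> 'a \<Rightarrow> real" where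
  "idle \<tau> x B i s =
     (if i \<le> 1 then 0
      else max 0 (- (wait \<tau> x B (i - 1) s + B (\<tau> (i - 1)) s - x (\<tau> (i - 1)))))"

definition cost :: "'a measure \<Rightarrow> (nat \<Rightarrow> 'a \<Rightarrow> real) \<Rightarrow> nat \<Rightarrow> (nat \<Rightarrow> nat) \<Rightarrow> (nat \<Rightarrow> real) \<Rightarrow> real \<Rightarrow> real" where
  "cost M B n \<tau> x w =
     w * (\<Sum>i=1..n. \<integral>s. idle \<tau> x B i s \<partial>M)
     + (1 - w) * (\<Sum>i=1..n. \<integral>s. wait \<tau> x B i s \<partial>M)"

definition mean_sched :: "'a measure \<Rightarrow> (nat \<Rightarrow> 'a \<Rightarrow> real) \<Rightarrow> nat \<Rightarrow> real" where
  "mean_sched M B j = (\<integral>s. B j s \<partial>M)"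

end

theory Submission
  imports Defs
begin

text \<open>
  With the mean-based schedule the expected idle times telescope to \<open>E W\<^sub>n\<close>, so every cost
  is a nonnegative combination of expected waiting times and it suffices to show
  \<open>E W\<^sup>Id\<^sub>k\<^sub>+\<^sub>1 \<le> 2 E W\<^sup>\<tau>\<^sub>k\<^sub>+\<^sub>1\<close> slot by slot. Let \<open>S\<^sub>k\<close> be the sum of the centred service times
  \<open>B\<^sub>i - \<mu>\<^sub>i\<close> of the first \<open>k\<close> patients in the identity sequence and \<open>S\<^sup>\<tau>\<^sub>k\<close> the same sum over
  \<open>\<tau>(1), \<dots>, \<tau>(k)\<close>. Along the Lindley recursion the symmetry of the centred service times
  keeps \<open>W\<^sup>Id\<^sub>k\<^sub>+\<^sub>1\<close> below \<open>|S\<^sub>k|\<close> in the stop-loss order, and \<open>E |S\<^sub>k| = 2 E S\<^sub>k\<^sup>+\<close>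
  because \<open>E S\<^sub>k = 0\<close>. The dilation order makes the centred service times increase in the
  stop-loss order, which is preserved under adding independent summands, so exchanging
  summands one at a time gives \<open>E S\<^sub>k\<^sup>+ \<le> E (S\<^sup>\<tau>\<^sub>k)\<^sup>+\<close>. Finally
  \<open>(S\<^sup>\<tau>\<^sub>k)\<^sup>+ \<le> W\<^sup>\<tau>\<^sub>k\<^sub>+\<^sub>1\<close> pointwise.
\<close>

section \<open>Independence\<close>

lemma (in prob_space) indep_var_commute:
  assumes "indep_var S X T Y"
  shows "indep_var T Y S X"
proof -
  have rv[measurable]: "random_variable S X" "random_variable T Y"
    using assms indep_var_distribution_eq by auto
  interpret PX: prob_space "distr M S X" by (rule prob_space_distr) (rule rv)
  interpret PY: prob_space "distr M T Y" by (rule prob_space_distr) (rule rv)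
  interpret P: pair_sigma_finite "distr M T Y" "distr M S X" ..
  have "distr M T Y \<Otimes>\<^sub>M distr M S X
      = distr (distr M S X \<Otimes>\<^sub>M distr M T Y) (distr M T Y \<Otimes>\<^sub>M distr M S X) (\<lambda>(x, y). (y, x))"
    by (rule P.distr_pair_swap)
  also have "\<dots> = distr (distr M (S \<Otimes>\<^sub>M T) (\<lambda>\<omega>. (X \<omega>, Y \<omega>))) (T \<Otimes>\<^sub>M S) (\<lambda>(x, y). (y, x))"
    using assms indep_var_distribution_eq
    by (intro distr_cong sets_pair_measure_cong sets_distr) auto
  also have "\<dots> = distr M (T \<Otimes>\<^sub>M S) (\<lambda>\<omega>. (Y \<omega>, X \<omega>))"
    by (subst distr_distr) (auto simp: comp_def)
  finally show ?thesis
    using rv by (simp add: indep_var_distribution_eq)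
qed

lemma (in prob_space) indep_var_nn_integral_iterated:
  fixes Y Z :: "'a \<Rightarrow> real" and g :: "real \<Rightarrow> real \<Rightarrow> ennreal"
  assumes ind: "indep_var borel Y borel Z"
    and g[measurable]: "(\<lambda>p. g (fst p) (snd p)) \<in> borel_measurable (borel \<Otimes>\<^sub>M borel)"
  shows "(\<integral>\<^sup>+\<omega>. g (Y \<omega>) (Z \<omega>) \<partial>M) = (\<integral>\<^sup>+\<omega>. (\<integral>\<^sup>+\<omega>'. g (Y \<omega>) (Z \<omega>') \<partial>M) \<partial>M)"
proof -
  have rv[measurable]: "Y \<in> borel_measurable M" "Z \<in> borel_measurable M"
    using ind indep_var_distribution_eq by auto
  have joint: "distr M borel Y \<Otimes>\<^sub>M distr M borel Z = distr M (borel \<Otimes>\<^sub>M borel) (\<lambda>\<omega>. (Y \<omega>, Z \<omega>))"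
    using ind indep_var_distribution_eq by auto
  have [measurable]: "(\<lambda>z. g y z) \<in> borel_measurable borel" for y
    using measurable_compose[where f="\<lambda>z. (y, z)", OF _ g] by simp
  interpret PY: prob_space "distr M borel Y" by (rule prob_space_distr) (rule rv)
  interpret PZ: prob_space "distr M borel Z" by (rule prob_space_distr) (rule rv)
  interpret P: pair_prob_space "distr M borel Y" "distr M borel Z" ..
  have gm: "(\<lambda>p. g (fst p) (snd p)) \<in> borel_measurable (distr M borel Y \<Otimes>\<^sub>M distr M borel Z)"
    by (simp add: joint)
  have "(\<integral>\<^sup>+\<omega>. g (Y \<omega>) (Z \<omega>) \<partial>M)
      = (\<integral>\<^sup>+p. g (fst p) (snd p) \<partial>(distr M borel Y \<Otimes>\<^sub>M distr M borel Z))"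
    by (simp add: joint nn_integral_distr)
  also have "\<dots> = (\<integral>\<^sup>+y. (\<integral>\<^sup>+z. g y z \<partial>distr M borel Z) \<partial>distr M borel Y)"
    using PZ.nn_integral_fst[OF gm] by simp
  also have "\<dots> = (\<integral>\<^sup>+\<omega>. (\<integral>\<^sup>+z. g (Y \<omega>) z \<partial>distr M borel Z) \<partial>M)"
  proof -
    have "(\<lambda>p. g (fst p) (snd p)) \<in> borel_measurable (borel \<Otimes>\<^sub>M distr M borel Z)"
      using g by (simp add: measurable_cong_sets[OF sets_pair_measure_cong[OF refl sets_distr] refl])
    then have "(\<lambda>y. \<integral>\<^sup>+z. g y z \<partial>distr M borel Z) \<in> borel_measurable borel"
      using PZ.borel_measurable_nn_integral[of g borel] by (simp add: split_beta')
    then show ?thesis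
      by (simp add: nn_integral_distr)
  qed
  also have "\<dots> = (\<integral>\<^sup>+\<omega>. (\<integral>\<^sup>+\<omega>'. g (Y \<omega>) (Z \<omega>') \<partial>M) \<partial>M)"
    by (intro nn_integral_cong) (simp add: nn_integral_distr)
  finally show ?thesis .
qed

lemma (in prob_space) indep_var_restrict_component:
  fixes X :: "'i \<Rightarrow> 'a \<Rightarrow> real"
  assumes ind: "indep_vars (\<lambda>_. borel) X I" and "J \<subseteq> I" "k \<in> I" "k \<notin> J"
    and f: "f \<in> borel_measurable (PiM J (\<lambda>_. borel))" and h: "h \<in> borel_measurable borel"
  shows "indep_var borel (\<lambda>\<omega>. f (restrict (\<lambda>i. X i \<omega>) J)) borel (\<lambda>\<omega>. h (X k \<omega>))"
proof -
  have "(\<lambda>x. h (x k)) \<in> borel_measurable (PiM {k} (\<lambda>_. borel))"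
    using measurable_compose[OF measurable_component_singleton[of k "{k}" "\<lambda>_. borel"] h] by simp
  from indep_var_compose[OF indep_var_restrict[OF ind] f this]
  show ?thesis
    using assms by (simp add: comp_def)
qed

section \<open>The stop-loss order\<close>

text \<open>The increasing convex order \<open>X \<le>\<^sub>i\<^sub>c\<^sub>x Y\<close>, expressed through stop-loss transforms
  \<open>E (X - u)\<^sup>+\<close>; using nonnegative integrals avoids integrability side conditions.\<close>

definition stop_loss_le :: "'a measure \<Rightarrow> ('a \<Rightarrow> real) \<Rightarrow> ('a \<Rightarrow> real) \<Rightarrow> bool" where
  "stop_loss_le M X Y \<longleftrightarrow>
     (\<forall>u. (\<integral>\<^sup>+\<omega>. ennreal (max 0 (X \<omega> - u)) \<partial>M) \<le> (\<integral>\<^sup>+\<omega>. ennreal (max 0 (Y \<omega> - u)) \<partial>M))"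

lemma stop_loss_leD:
  "stop_loss_le M X Y \<Longrightarrow>
     (\<integral>\<^sup>+\<omega>. ennreal (max 0 (X \<omega> - u)) \<partial>M) \<le> (\<integral>\<^sup>+\<omega>. ennreal (max 0 (Y \<omega> - u)) \<partial>M)"
  by (simp add: stop_loss_le_def)

lemma stop_loss_le_refl: "stop_loss_le M X X"
  by (simp add: stop_loss_le_def)

lemma stop_loss_le_trans [trans]: "stop_loss_le M X Y \<Longrightarrow> stop_loss_le M Y Z \<Longrightarrow> stop_loss_le M X Z"
  unfolding stop_loss_le_def by (blast intro: order_trans)

lemma (in prob_space) stop_loss_le_integral:
  assumes "stop_loss_le M X Y" "integrable M X" "integrable M Y"
  shows "(\<integral>\<omega>. max 0 (X \<omega> - u) \<partial>M) \<le> (\<integral>\<omega>. max 0 (Y \<omega> - u) \<partial>M)"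
  using stop_loss_leD[OF assms(1), of u] assms(2,3)
  by (subst (asm) (1 2) nn_integral_eq_integral) auto

lemma (in prob_space) stop_loss_le_nonnegI:
  assumes X[measurable]: "X \<in> borel_measurable M" and Y[measurable]: "Y \<in> borel_measurable M"
    and nonneg: "\<And>\<omega>. 0 \<le> X \<omega>" "\<And>\<omega>. 0 \<le> Y \<omega>"
    and le: "\<And>u. 0 \<le> u \<Longrightarrow>
      (\<integral>\<^sup>+\<omega>. ennreal (max 0 (X \<omega> - u)) \<partial>M) \<le> (\<integral>\<^sup>+\<omega>. ennreal (max 0 (Y \<omega> - u)) \<partial>M)"
  shows "stop_loss_le M X Y"
  unfolding stop_loss_le_def
proof
  fix u :: real
  show "(\<integral>\<^sup>+\<omega>. ennreal (max 0 (X \<omega> - u)) \<partial>M) \<le> (\<integral>\<^sup>+\<omega>. ennreal (max 0 (Y \<omega> - u)) \<partial>M)"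
  proof (cases "0 \<le> u")
    case False
    have shift: "(\<integral>\<^sup>+\<omega>. ennreal (max 0 (Z \<omega> - u)) \<partial>M) = (\<integral>\<^sup>+\<omega>. ennreal (max 0 (Z \<omega> - 0)) \<partial>M) + ennreal (- u)"
      if [measurable]: "Z \<in> borel_measurable M" and "\<And>\<omega>. 0 \<le> Z \<omega>" for Z
    proof -
      have "(\<integral>\<^sup>+\<omega>. ennreal (max 0 (Z \<omega> - u)) \<partial>M) = (\<integral>\<^sup>+\<omega>. ennreal (max 0 (Z \<omega> - 0)) + ennreal (- u) \<partial>M)"
      proof (rule nn_integral_cong)
        fix \<omega>
        show "ennreal (max 0 (Z \<omega> - u)) = ennreal (max 0 (Z \<omega> - 0)) + ennreal (- u)"
          using that(2)[of \<omega>] False by (simp add: max_def flip: ennreal_plus)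
      qed
      then show ?thesis
        by (simp add: nn_integral_add emeasure_space_1)
    qed
    show ?thesis
      unfolding shift[OF X nonneg(1)] shift[OF Y nonneg(2)] by (rule add_right_mono) (rule le, simp)
  qed (rule le)
qed

text \<open>For \<open>c < 0\<close> replace \<open>X\<close> by \<open>-X\<close>: then \<open>|c| - X = -(c + X) \<le> |c + X|\<close>.\<close>

lemma (in prob_space) stop_loss_abs_shift_symmetric:
  fixes X :: "'a \<Rightarrow> real"
  assumes [measurable]: "X \<in> borel_measurable M"
    and sym: "distr M borel X = distr M borel (\<lambda>\<omega>. - X \<omega>)"
  shows "(\<integral>\<^sup>+\<omega>. ennreal (max 0 (\<bar>c\<bar> + X \<omega> - v)) \<partial>M) \<le> (\<integral>\<^sup>+\<omega>. ennreal (max 0 (\<bar>c + X \<omega>\<bar> - v)) \<partial>M)"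
proof (cases "c \<ge> 0")
  case True
  then show ?thesis by (intro nn_integral_mono) (auto intro!: ennreal_leI)
next
  case False
  have "(\<integral>\<^sup>+\<omega>. ennreal (max 0 (\<bar>c\<bar> + X \<omega> - v)) \<partial>M)
      = (\<integral>\<^sup>+x. ennreal (max 0 (\<bar>c\<bar> + x - v)) \<partial>distr M borel X)"
    by (simp add: nn_integral_distr)
  also have "\<dots> = (\<integral>\<^sup>+\<omega>. ennreal (max 0 (\<bar>c\<bar> - X \<omega> - v)) \<partial>M)"
    by (simp add: sym nn_integral_distr)
  also have "\<dots> \<le> (\<integral>\<^sup>+\<omega>. ennreal (max 0 (\<bar>c + X \<omega>\<bar> - v)) \<partial>M)"
    using False by (intro nn_integral_mono) (auto intro!: ennreal_leI)
  finally show ?thesis .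
qed

lemma (in prob_space) stop_loss_le_Lindley_step:
  fixes Y S X :: "'a \<Rightarrow> real"
  assumes indY: "indep_var borel Y borel X" and indS: "indep_var borel S borel X"
    and sym: "distr M borel X = distr M borel (\<lambda>\<omega>. - X \<omega>)"
    and le: "stop_loss_le M Y (\<lambda>\<omega>. \<bar>S \<omega>\<bar>)"
  shows "stop_loss_le M (\<lambda>\<omega>. max 0 (Y \<omega> + X \<omega>)) (\<lambda>\<omega>. \<bar>S \<omega> + X \<omega>\<bar>)"
proof (rule stop_loss_le_nonnegI)
  have [measurable]: "X \<in> borel_measurable M" "Y \<in> borel_measurable M" "S \<in> borel_measurable M"
    using indY indS indep_var_distribution_eq by auto
  show "(\<lambda>\<omega>. max 0 (Y \<omega> + X \<omega>)) \<in> borel_measurable M" "(\<lambda>\<omega>. \<bar>S \<omega> + X \<omega>\<bar>) \<in> borel_measurable M"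
    by measurable
  fix v :: real
  assume "0 \<le> v"
  then have "(\<integral>\<^sup>+\<omega>. ennreal (max 0 (max 0 (Y \<omega> + X \<omega>) - v)) \<partial>M)
      = (\<integral>\<^sup>+\<omega>. ennreal (max 0 (X \<omega> + Y \<omega> - v)) \<partial>M)"
    by (intro nn_integral_cong) (auto simp: max_def)
  also have "\<dots> = (\<integral>\<^sup>+\<omega>. (\<integral>\<^sup>+\<omega>'. ennreal (max 0 (Y \<omega>' - (v - X \<omega>))) \<partial>M) \<partial>M)"
    by (subst indep_var_nn_integral_iterated[OF indep_var_commute[OF indY],
          where g="\<lambda>x y. ennreal (max 0 (x + y - v))"]) (simp_all add: algebra_simps)
  also have "\<dots> \<le> (\<integral>\<^sup>+\<omega>. (\<integral>\<^sup>+\<omega>'. ennreal (max 0 (\<bar>S \<omega>'\<bar> - (v - X \<omega>))) \<partial>M) \<partial>M)"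
    by (rule nn_integral_mono) (rule stop_loss_leD[OF le])
  also have "\<dots> = (\<integral>\<^sup>+\<omega>. ennreal (max 0 (\<bar>S \<omega>\<bar> + X \<omega> - v)) \<partial>M)"
    by (subst indep_var_nn_integral_iterated[OF indep_var_commute[OF indS],
          where g="\<lambda>x s. ennreal (max 0 (\<bar>s\<bar> + x - v))"]) (simp_all add: algebra_simps)
  also have "\<dots> = (\<integral>\<^sup>+\<omega>. (\<integral>\<^sup>+\<omega>'. ennreal (max 0 (\<bar>S \<omega>\<bar> + X \<omega>' - v)) \<partial>M) \<partial>M)"
    by (rule indep_var_nn_integral_iterated[OF indS, where g="\<lambda>s x. ennreal (max 0 (\<bar>s\<bar> + x - v))"]) simp
  also have "\<dots> \<le> (\<integral>\<^sup>+\<omega>. (\<integral>\<^sup>+\<omega>'. ennreal (max 0 (\<bar>S \<omega> + X \<omega>'\<bar> - v)) \<partial>M) \<partial>M)"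
    by (intro nn_integral_mono stop_loss_abs_shift_symmetric sym) simp
  also have "\<dots> = (\<integral>\<^sup>+\<omega>. ennreal (max 0 (\<bar>S \<omega> + X \<omega>\<bar> - v)) \<partial>M)"
    by (rule indep_var_nn_integral_iterated[OF indS, where g="\<lambda>s x. ennreal (max 0 (\<bar>s + x\<bar> - v))", symmetric]) simp
  finally show "(\<integral>\<^sup>+\<omega>. ennreal (max 0 (max 0 (Y \<omega> + X \<omega>) - v)) \<partial>M)
      \<le> (\<integral>\<^sup>+\<omega>. ennreal (max 0 (\<bar>S \<omega> + X \<omega>\<bar> - v)) \<partial>M)" .
qed auto

lemma (in prob_space) stop_loss_le_add_indep:
  assumes indX: "indep_var borel Z borel X" and indY: "indep_var borel Z borel Y"
    and le: "stop_loss_le M X Y"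
  shows "stop_loss_le M (\<lambda>\<omega>. Z \<omega> + X \<omega>) (\<lambda>\<omega>. Z \<omega> + Y \<omega>)"
  unfolding stop_loss_le_def
proof
  fix u :: real
  have "(\<integral>\<^sup>+\<omega>. ennreal (max 0 (Z \<omega> + X \<omega> - u)) \<partial>M)
      = (\<integral>\<^sup>+\<omega>. (\<integral>\<^sup>+\<omega>'. ennreal (max 0 (X \<omega>' - (u - Z \<omega>))) \<partial>M) \<partial>M)"
    by (subst indep_var_nn_integral_iterated[OF indX, where g="\<lambda>z x. ennreal (max 0 (z + x - u))"])
      (simp_all add: algebra_simps)
  also have "\<dots> \<le> (\<integral>\<^sup>+\<omega>. (\<integral>\<^sup>+\<omega>'. ennreal (max 0 (Y \<omega>' - (u - Z \<omega>))) \<partial>M) \<partial>M)"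
    by (rule nn_integral_mono) (rule stop_loss_leD[OF le])
  also have "\<dots> = (\<integral>\<^sup>+\<omega>. ennreal (max 0 (Z \<omega> + Y \<omega> - u)) \<partial>M)"
    by (subst indep_var_nn_integral_iterated[OF indY, where g="\<lambda>z y. ennreal (max 0 (z + y - u))"])
      (simp_all add: algebra_simps)
  finally show "(\<integral>\<^sup>+\<omega>. ennreal (max 0 (Z \<omega> + X \<omega> - u)) \<partial>M)
      \<le> (\<integral>\<^sup>+\<omega>. ennreal (max 0 (Z \<omega> + Y \<omega> - u)) \<partial>M)" .
qed

lemma (in prob_space) stop_loss_le_exchange_summand:
  fixes X :: "nat \<Rightarrow> 'a \<Rightarrow> real"
  assumes ind: "indep_vars (\<lambda>_. borel) X I" and le: "stop_loss_le M (X a) (X b)"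
    and "finite C" "C \<subseteq> I" "a \<in> I" "a \<notin> C" "b \<in> I" "b \<notin> C"
  shows "stop_loss_le M (\<lambda>\<omega>. \<Sum>i\<in>insert a C. X i \<omega>) (\<lambda>\<omega>. \<Sum>i\<in>insert b C. X i \<omega>)"
proof -
  have sum_m: "(\<lambda>x. \<Sum>i\<in>C. x i :: real) \<in> borel_measurable (PiM C (\<lambda>_. borel))"
    by measurable
  have "indep_var borel (\<lambda>\<omega>. \<Sum>i\<in>C. X i \<omega>) borel (X k)" if "k \<in> I" "k \<notin> C" for k
    using indep_var_restrict_component[OF ind \<open>C \<subseteq> I\<close> that sum_m, of id] by simp
  from stop_loss_le_add_indep[OF this this le] assms
  show ?thesis
    by (simp add: \<open>finite C\<close> add.commute)
qed

lemma convex_on_pos_part_shift: "convex_on UNIV (\<lambda>x::real. max 0 (x - u))"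
proof (rule convex_onI)
  fix t x y :: real
  assume "0 < t" "t < 1"
  then have "(1 - t) * (x - u) \<le> (1 - t) * max 0 (x - u)" "t * (y - u) \<le> t * max 0 (y - u)"
    and "0 \<le> (1 - t) * max 0 (x - u)" "0 \<le> t * max 0 (y - u)"
    by (simp_all add: mult_left_mono)
  moreover have "(1 - t) *\<^sub>R x + t *\<^sub>R y - u = (1 - t) * (x - u) + t * (y - u)"
    by (simp add: algebra_simps)
  ultimately show "max 0 ((1 - t) *\<^sub>R x + t *\<^sub>R y - u) \<le> (1 - t) * max 0 (x - u) + t * max 0 (y - u)"
    by linarith
qed simp

lemma (in prob_space) dil_le_imp_stop_loss_le:
  assumes dil: "dil_le M A C" and A: "integrable M A" and C: "integrable M C"
  shows "stop_loss_le M (\<lambda>\<omega>. A \<omega> - expectation A) (\<lambda>\<omega>. C \<omega> - expectation C)"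
  unfolding stop_loss_le_def
proof
  fix u :: real
  have "(\<integral>\<omega>. max 0 (A \<omega> - expectation A - u) \<partial>M) \<le> (\<integral>\<omega>. max 0 (C \<omega> - expectation C - u) \<partial>M)"
    using dil convex_on_pos_part_shift[of u] A C unfolding dil_le_def cx_le_def by auto
  then show "(\<integral>\<^sup>+\<omega>. ennreal (max 0 (A \<omega> - expectation A - u)) \<partial>M)
      \<le> (\<integral>\<^sup>+\<omega>. ennreal (max 0 (C \<omega> - expectation C - u)) \<partial>M)"
    using A C by (subst (1 2) nn_integral_eq_integral) auto
qed

lemma stop_loss_le_chain:
  assumes "\<And>i. 1 \<le> i \<Longrightarrow> i < n \<Longrightarrow> stop_loss_le M (X i) (X (Suc i))"
    and "a \<in> {1..n}" "b \<in> {1..n}" "a \<le> b"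
  shows "stop_loss_le M (X a) (X b)"
  using \<open>a \<le> b\<close> \<open>b \<in> {1..n}\<close>
proof (induction b rule: dec_induct)
  case base
  show ?case by (rule stop_loss_le_refl)
next
  case (step m)
  then show ?case
    using assms(1)[of m] \<open>a \<in> {1..n}\<close> by (auto intro: stop_loss_le_trans)
qed

lemma (in prob_space) stop_loss_le_sum_initial_segment:
  fixes X :: "nat \<Rightarrow> 'a \<Rightarrow> real"
  assumes ind: "indep_vars (\<lambda>_. borel) X {1..n}"
    and chain: "\<And>i. 1 \<le> i \<Longrightarrow> i < n \<Longrightarrow> stop_loss_le M (X i) (X (Suc i))"
    and "A \<subseteq> {1..n}" "card A = k"
  shows "stop_loss_le M (\<lambda>\<omega>. \<Sum>i=1..k. X i \<omega>) (\<lambda>\<omega>. \<Sum>i\<in>A. X i \<omega>)"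
  using assms(3,4)
proof (induction "\<Sum>A" arbitrary: A rule: less_induct)
  case less
  have "finite A"
    using less.prems(1) finite_subset by blast
  show ?case
  proof (cases "A = {1..k}")
    case True
    then show ?thesis by (simp add: stop_loss_le_refl)
  next
    case False
    \<comment> \<open>Exchange an element beyond k for a missing element of the initial segment, lowering the index sum.\<close>
    have "\<not> A \<subseteq> {1..k}" "\<not> {1..k} \<subseteq> A"
      using False less.prems \<open>finite A\<close> card_subset_eq[of "{1..k}" A] card_subset_eq[of A "{1..k}"]
      by auto
    then obtain a b where a: "a \<in> {1..k}" "a \<notin> A" and b: "b \<in> A" "b \<notin> {1..k}"
      by blast
    define C where "C = A - {b}"
    have "k \<le> n"
      using card_mono[OF _ less.prems(1)] less.prems(2) by simp
    have C: "finite C" "C \<subseteq> {1..n}" "a \<notin> C" "b \<notin> C" "A = insert b C"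
      using less.prems(1) a b \<open>finite A\<close> by (auto simp: C_def)
    have ab: "a \<in> {1..n}" "b \<in> {1..n}" "a < b"
      using a b \<open>k \<le> n\<close> less.prems(1) by auto
    have "card (insert a C) = k" "insert a C \<subseteq> {1..n}" "\<Sum>(insert a C) < \<Sum>A"
      using C ab less.prems by auto
    then have "stop_loss_le M (\<lambda>\<omega>. \<Sum>i=1..k. X i \<omega>) (\<lambda>\<omega>. \<Sum>i\<in>insert a C. X i \<omega>)"
      using less.hyps by blast
    also have "stop_loss_le M (\<lambda>\<omega>. \<Sum>i\<in>insert a C. X i \<omega>) (\<lambda>\<omega>. \<Sum>i\<in>A. X i \<omega>)"
      unfolding \<open>A = insert b C\<close>
      using stop_loss_le_exchange_summand[OF ind stop_loss_le_chain[of n M X, OF chain]] C ab by simp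
    finally show ?thesis .
  qed
qed

section \<open>Waiting times\<close>

lemma wait_nonneg: "0 \<le> wait \<tau> x B j s"
  by (induction j) auto

lemma wait_cong:
  assumes "\<And>i. 1 \<le> i \<Longrightarrow> i < j \<Longrightarrow> B' (\<tau> i) s' = B (\<tau> i) s"
  shows "wait \<tau> x B' j s' = wait \<tau> x B j s"
  using assms by (induction j) auto

lemma wait_measurable:
  assumes "\<And>i. 1 \<le> i \<Longrightarrow> i < j \<Longrightarrow> B (\<tau> i) \<in> borel_measurable N"
  shows "(\<lambda>s. wait \<tau> x B j s) \<in> borel_measurable N"
  using assms
proof (induction j)
  case 0
  then show ?case by simp
next
  case (Suc j)
  then show ?case by (cases "j = 0") auto
qed

lemma wait_le_sum_abs: "wait \<tau> x B j s \<le> (\<Sum>i\<in>{1..<j}. \<bar>B (\<tau> i) s - x (\<tau> i)\<bar>)"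
proof (induction j)
  case (Suc j)
  then show ?case
    by (cases "j = 0") (auto simp: atLeastLessThanSuc)
qed simp

lemma sum_le_wait: "(\<Sum>i=1..k. B (\<tau> i) s - x (\<tau> i)) \<le> wait \<tau> x B (Suc k) s"
  by (induction k) auto

lemma (in prob_space) integrable_wait:
  assumes "\<And>i. 1 \<le> i \<Longrightarrow> i < j \<Longrightarrow> integrable M (B (\<tau> i))"
  shows "integrable M (\<lambda>s. wait \<tau> x B j s)"
proof (rule Bochner_Integration.integrable_bound)
  show "integrable M (\<lambda>s. \<Sum>i\<in>{1..<j}. \<bar>B (\<tau> i) s - x (\<tau> i)\<bar>)"
    using assms by auto
  show "(\<lambda>s. wait \<tau> x B j s) \<in> borel_measurable M"
    using assms by (intro wait_measurable) auto
  show "AE s in M. norm (wait \<tau> x B j s) \<le> norm (\<Sum>i\<in>{1..<j}. \<bar>B (\<tau> i) s - x (\<tau> i)\<bar>)"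
    using wait_le_sum_abs[of \<tau> x B j] wait_nonneg[of \<tau> x B j]
    by (auto intro!: AE_I2 order_trans[OF _ abs_ge_self])
qed

lemma idle_Suc_eq:
  "1 \<le> m \<Longrightarrow>
     idle \<tau> x B (Suc m) s = wait \<tau> x B (Suc m) s - (wait \<tau> x B m s + B (\<tau> m) s - x (\<tau> m))"
  by (auto simp: idle_def max_def)

lemma (in prob_space) sum_idle_eq_wait:
  assumes "\<And>i. 1 \<le> i \<Longrightarrow> i < m \<Longrightarrow> integrable M (B (\<tau> i))"
    and "\<And>i. 1 \<le> i \<Longrightarrow> i < m \<Longrightarrow> expectation (B (\<tau> i)) = x (\<tau> i)"
  shows "(\<Sum>i=1..m. expectation (idle \<tau> x B i)) = expectation (wait \<tau> x B m)"
  using assms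
proof (induction m)
  case 0
  then show ?case by simp
next
  case (Suc m)
  show ?case
  proof (cases "m = 0")
    case True
    then show ?thesis by (simp add: idle_def)
  next
    case False
    have int: "integrable M (wait \<tau> x B (Suc m))" "integrable M (wait \<tau> x B m)" "integrable M (B (\<tau> m))"
      using Suc.prems False by (auto intro: integrable_wait)
    have "expectation (idle \<tau> x B (Suc m))
        = expectation (\<lambda>s. wait \<tau> x B (Suc m) s - (wait \<tau> x B m s + B (\<tau> m) s - x (\<tau> m)))"
      using False by (intro Bochner_Integration.integral_cong) (simp_all add: idle_Suc_eq)
    also have "\<dots> = expectation (wait \<tau> x B (Suc m)) - expectation (wait \<tau> x B m)"
      using int Suc.prems(2)[of m] False by (simp add: prob_space del: wait.simps)
    finally show ?thesis
      using Suc by (simp del: wait.simps)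
  qed
qed

lemma (in prob_space) stop_loss_le_wait_id:
  fixes B :: "nat \<Rightarrow> 'a \<Rightarrow> real" and \<mu> :: "nat \<Rightarrow> real"
  assumes ind: "indep_vars (\<lambda>_. borel) B {1..n}"
    and sym: "\<And>i. i \<in> {1..n} \<Longrightarrow> distr M borel (\<lambda>s. B i s - \<mu> i) = distr M borel (\<lambda>s. \<mu> i - B i s)"
    and "j < n"
  shows "stop_loss_le M (wait id \<mu> B (Suc j)) (\<lambda>\<omega>. \<bar>\<Sum>i=1..j. B i \<omega> - \<mu> i\<bar>)"
  using \<open>j < n\<close>
proof (induction j)
  case 0
  then show ?case by (simp add: stop_loss_le_def)
next
  case (Suc j)
  have k: "Suc j \<in> {1..n}" "Suc j \<notin> {1..j}" "{1..j} \<subseteq> {1..n}"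
    using Suc.prems by auto
  have shifted: "(\<lambda>b. b - \<mu> (Suc j)) \<in> borel_measurable borel"
    by measurable
  have wait_m: "(\<lambda>y. wait id \<mu> (\<lambda>i y. y i) (Suc j) y) \<in> borel_measurable (PiM {1..j} (\<lambda>_. borel))"
    by (rule wait_measurable) auto
  have wait_restrict: "wait id \<mu> (\<lambda>i y. y i) (Suc j) (restrict (\<lambda>i. B i \<omega>) {1..j}) = wait id \<mu> B (Suc j) \<omega>" for \<omega>
    by (rule wait_cong) auto
  have indY: "indep_var borel (wait id \<mu> B (Suc j)) borel (\<lambda>\<omega>. B (Suc j) \<omega> - \<mu> (Suc j))"
    using indep_var_restrict_component[OF ind k(3,1,2) wait_m shifted] by (simp only: wait_restrict)
  have "(\<lambda>y. \<Sum>i=1..j. y i - \<mu> i :: real) \<in> borel_measurable (PiM {1..j} (\<lambda>_. borel))"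
    by measurable
  from indep_var_restrict_component[OF ind k(3,1,2) this shifted]
  have indS: "indep_var borel (\<lambda>\<omega>. \<Sum>i=1..j. B i \<omega> - \<mu> i) borel (\<lambda>\<omega>. B (Suc j) \<omega> - \<mu> (Suc j))"
    by simp
  have "distr M borel (\<lambda>\<omega>. B (Suc j) \<omega> - \<mu> (Suc j)) = distr M borel (\<lambda>\<omega>. - (B (Suc j) \<omega> - \<mu> (Suc j)))"
    using sym[OF k(1)] by simp
  from stop_loss_le_Lindley_step[OF indY indS this Suc.IH] Suc.prems
  show ?case
    by (simp add: algebra_simps)
qed

lemma (in prob_space) integral_abs_eq_twice_pos_part:
  fixes X :: "'a \<Rightarrow> real"
  assumes "integrable M X" "expectation X = 0"
  shows "expectation (\<lambda>\<omega>. \<bar>X \<omega>\<bar>) = 2 * expectation (\<lambda>\<omega>. max 0 (X \<omega>))"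
proof -
  have "expectation (\<lambda>\<omega>. \<bar>X \<omega>\<bar>) = expectation (\<lambda>\<omega>. 2 * max 0 (X \<omega>) - X \<omega>)"
    by (intro Bochner_Integration.integral_cong) (auto simp: max_def)
  then show ?thesis
    using assms by simp
qed

lemma (in prob_space) expectation_wait_id_le_twice:
  fixes B :: "nat \<Rightarrow> 'a \<Rightarrow> real" and \<mu> :: "nat \<Rightarrow> real"
  assumes ind: "indep_vars (\<lambda>_. borel) B {1..n}"
    and int: "\<And>i. i \<in> {1..n} \<Longrightarrow> integrable M (B i)"
    and mean: "\<And>i. i \<in> {1..n} \<Longrightarrow> expectation (B i) = \<mu> i"
    and sym: "\<And>i. i \<in> {1..n} \<Longrightarrow> distr M borel (\<lambda>s. B i s - \<mu> i) = distr M borel (\<lambda>s. \<mu> i - B i s)"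
    and chain: "\<And>i. 1 \<le> i \<Longrightarrow> i < n \<Longrightarrow>
      stop_loss_le M (\<lambda>\<omega>. B i \<omega> - \<mu> i) (\<lambda>\<omega>. B (Suc i) \<omega> - \<mu> (Suc i))"
    and \<tau>: "\<tau> permutes {1..n}" and "k < n"
  shows "expectation (wait id \<mu> B (Suc k)) \<le> 2 * expectation (wait \<tau> \<mu> B (Suc k))"
proof -
  define S where "S \<omega> = (\<Sum>i=1..k. B i \<omega> - \<mu> i)" for \<omega>
  define S\<tau> where "S\<tau> \<omega> = (\<Sum>i\<in>\<tau> ` {1..k}. B i \<omega> - \<mu> i)" for \<omega>
  have inj: "inj_on \<tau> A" for A
    using permutes_inj[OF \<tau>] by (rule inj_on_subset) simp
  have \<tau>_img: "\<tau> ` {1..k} \<subseteq> {1..n}" "card (\<tau> ` {1..k}) = k"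
    using permutes_image[OF \<tau>] \<open>k < n\<close> card_image[OF inj, of "{1..k}"] by auto
  have int_S: "integrable M S" "integrable M S\<tau>"
    unfolding S_def S\<tau>_def using int \<tau>_img(1) \<open>k < n\<close>
    by (intro Bochner_Integration.integrable_sum Bochner_Integration.integrable_diff; force)+
  have int_wait: "integrable M (wait id \<mu> B (Suc k))" "integrable M (wait \<tau> \<mu> B (Suc k))"
    using int permutes_in_image[OF \<tau>] \<open>k < n\<close> by (auto intro!: integrable_wait)
  have "stop_loss_le M (wait id \<mu> B (Suc k)) (\<lambda>\<omega>. \<bar>S \<omega>\<bar>)"
    using stop_loss_le_wait_id[OF ind sym \<open>k < n\<close>] by (simp add: S_def)
  from stop_loss_le_integral[OF this int_wait(1) integrable_abs[OF int_S(1)], of 0]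
  have "expectation (wait id \<mu> B (Suc k)) \<le> expectation (\<lambda>\<omega>. \<bar>S \<omega>\<bar>)"
    by (simp add: wait_nonneg max.absorb2 del: wait.simps)
  also have "\<dots> = 2 * expectation (\<lambda>\<omega>. max 0 (S \<omega>))"
    using int mean \<open>k < n\<close> int_S(1)
    by (intro integral_abs_eq_twice_pos_part)
      (simp_all add: S_def[abs_def] Bochner_Integration.integral_sum prob_space)
  also have "\<dots> \<le> 2 * expectation (\<lambda>\<omega>. max 0 (S\<tau> \<omega>))"
  proof -
    have "indep_vars (\<lambda>_. borel) (\<lambda>i \<omega>. B i \<omega> - \<mu> i) {1..n}"
      by (rule indep_vars_compose2[OF ind]) measurable
    from stop_loss_le_sum_initial_segment[OF this chain \<tau>_img]
    have "stop_loss_le M S S\<tau>"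
      by (simp add: S_def[abs_def] S\<tau>_def[abs_def])
    then show ?thesis
      using stop_loss_le_integral[of S S\<tau> 0] int_S by simp
  qed
  also have "\<dots> \<le> 2 * expectation (wait \<tau> \<mu> B (Suc k))"
  proof -
    have "S\<tau> \<omega> = (\<Sum>i=1..k. B (\<tau> i) \<omega> - \<mu> (\<tau> i))" for \<omega>
      unfolding S\<tau>_def by (simp add: sum.reindex[OF inj])
    then have "max 0 (S\<tau> \<omega>) \<le> wait \<tau> \<mu> B (Suc k) \<omega>" for \<omega>
      by (metis max.boundedI sum_le_wait wait_nonneg)
    then show ?thesis
      using int_S int_wait by (simp add: integral_mono del: wait.simps)
  qed
  finally show ?thesis .
qed

lemma (in prob_space) cost_mean_sched_eq:
  assumes "\<And>i. i \<in> {1..n} \<Longrightarrow> integrable M (B i)" and "\<And>i. i \<in> {1..n} \<Longrightarrow> \<sigma> i \<in> {1..n}"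
  shows "cost M B n \<sigma> (mean_sched M B) w
    = w * expectation (wait \<sigma> (mean_sched M B) B n)
      + (1 - w) * (\<Sum>i=1..n. expectation (wait \<sigma> (mean_sched M B) B i))"
  unfolding cost_def using assms
  by (subst sum_idle_eq_wait) (auto simp: mean_sched_def)

theorem theorem3p1:
  fixes M :: "'a measure" and B :: "nat \<Rightarrow> 'a \<Rightarrow> real" and n :: nat and w :: real
  assumes "prob_space M"
    and "n \<ge> 1"
    and meas: "\<And>i. i \<in> {1..n} \<Longrightarrow> B i \<in> borel_measurable M"
    and indep: "prob_space.indep_vars M (\<lambda>_. borel) B {1..n}"
    and var_fin: "\<And>i. i \<in> {1..n} \<Longrightarrow> integrable M (\<lambda>s. (B i s)\<^sup>2)"
    and w: "0 < w" "w < 1"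
    and dil: "\<And>i. 1 \<le> i \<Longrightarrow> i < n \<Longrightarrow> dil_le M (B i) (B (Suc i))"
    and symm: "\<And>i. i \<in> {1..n} \<Longrightarrow>
       distr M borel (\<lambda>s. B i s - (\<integral>t. B i t \<partial>M)) = distr M borel (\<lambda>s. (\<integral>t. B i t \<partial>M) - B i s)"
  shows "\<forall>\<tau>. \<tau> permutes {1..n} \<longrightarrow>
           cost M B n id (mean_sched M B) w \<le> 2 * cost M B n \<tau> (mean_sched M B) w"
proof (intro allI impI)
  fix \<tau> assume \<tau>: "\<tau> permutes {1..n}"
  interpret prob_space M by fact
  let ?\<mu> = "mean_sched M B"
  have int: "integrable M (B i)" if "i \<in> {1..n}" for i
    using square_integrable_imp_integrable[OF meas[OF that] var_fin[OF that]] .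
  have slot: "expectation (wait id ?\<mu> B i) \<le> 2 * expectation (wait \<tau> ?\<mu> B i)" if "i \<in> {1..n}" for i
    using expectation_wait_id_le_twice[OF indep int _ _ _ \<tau>, of ?\<mu> "i - 1"]
      symm dil_le_imp_stop_loss_le[OF dil int int] that
    by (cases i) (auto simp: mean_sched_def)
  have "cost M B n id ?\<mu> w \<le> w * (2 * expectation (wait \<tau> ?\<mu> B n))
      + (1 - w) * (\<Sum>i=1..n. 2 * expectation (wait \<tau> ?\<mu> B i))"
    using w slot \<open>n \<ge> 1\<close>
    by (subst cost_mean_sched_eq[OF int]) (auto intro!: add_mono mult_left_mono sum_mono)
  also have "\<dots> = 2 * cost M B n \<tau> ?\<mu> w"
    using cost_mean_sched_eq[OF int permutes_in_image[OF \<tau>, THEN iffD2]]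
    by (simp add: sum_distrib_left algebra_simps)
  finally show "cost M B n id ?\<mu> w \<le> 2 * cost M B n \<tau> ?\<mu> w" .
qed

end
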